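(* Let $A\subseteq B$ be commutative semirings, $S=A[x_1,\dots,x_n]$, and $\rho$ a congruence on $B$ with $\rho\neq B\times B$. Then: (1) $Z_\rho(\{(0,1)\})(B)=\emptyset$ and $Z_\rho(\{(f,f)\})(B)=B^n$ for all $f\in S$; (2) for non-empty $T_1,T_2\subseteq S\times S$, $Z_\rho(T_1)(B)\cup Z_\rho(T_2)(B)\subseteq Z_\rho(T_1\ast T_2)(B)$; (3) the intersection of any family of $\rho$-algebraic varieties is a $\rho$-algebraic variety.
   Context: Semirings are commutative with $0$ and $1\neq0$, $0a=0$; congruences are equivalence relations compatible with $+,\cdot$. For non-empty $T\subseteq S\times S$, $Z_\rho(T)(B)=\{P\in B^n:(f(P),g(P))\in\rho\ \forall(f,g)\in T\}$; a $\rho$-algebraic variety is a set of this form. The twisted product is $(f_1,g_1)\ast(f_2,g_2)=(f_1f_2+g_1g_2,\ f_1g_2+g_1f_2)$ and $T_1\ast T_2=\{t_1\ast t_2:t_1\in T_1,t_2\in T_2\}$. *)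

theory Defs
  imports "HOL-Library.Poly_Mapping"
begin

text \<open>Polynomials in n variables
  x_0..x_{n-1} are finitely supported maps from monomials (exponent vectors nat =>0 nat)
  to coefficients.\<close>

definition subsemiring :: "'b::comm_semiring_1 set \<Rightarrow> bool" where
  "subsemiring A \<longleftrightarrow> 0 \<in> A \<and> 1 \<in> A \<and> (\<forall>a\<in>A. \<forall>b\<in>A. a + b \<in> A \<and> a * b \<in> A)"

definition congruence :: "('b::comm_semiring_1 \<times> 'b) set \<Rightarrow> bool" where
  "congruence \<rho> \<longleftrightarrow> equiv UNIV \<rho> \<and>
     (\<forall>a b c d. (a, b) \<in> \<rho> \<longrightarrow> (c, d) \<in> \<rho> \<longrightarrow> (a + c, b + d) \<in> \<rho> \<and> (a * c, b * d) \<in> \<rho>)"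

type_synonym 'b mpoly = "(nat \<Rightarrow>\<^sub>0 nat) \<Rightarrow>\<^sub>0 'b"

definition polys :: "'b::comm_semiring_1 set \<Rightarrow> nat \<Rightarrow> 'b mpoly set" where
  "polys A n = {f :: 'b mpoly. \<forall>m\<in>Poly_Mapping.keys f. Poly_Mapping.lookup f m \<in> A \<and> (\<forall>i\<in>Poly_Mapping.keys m. i < n)}"

definition points :: "nat \<Rightarrow> 'b list set" where
  "points n = {P. length P = n}"

definition eval :: "'b::comm_semiring_1 mpoly \<Rightarrow> 'b list \<Rightarrow> 'b" where
  "eval f P = (\<Sum>m\<in>Poly_Mapping.keys f. Poly_Mapping.lookup f m * (\<Prod>i\<in>Poly_Mapping.keys m. (P ! i) ^ Poly_Mapping.lookup m i))"

definition Zrho :: "('b::comm_semiring_1 \<times> 'b) set \<Rightarrow> nat \<Rightarrow> ('b mpoly \<times> 'b mpoly) set \<Rightarrow> 'b list set" where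
  "Zrho \<rho> n T = {P \<in> points n. \<forall>(f, g)\<in>T. (eval f P, eval g P) \<in> \<rho>}"

definition is_variety :: "'b::comm_semiring_1 set \<Rightarrow> ('b \<times> 'b) set \<Rightarrow> nat \<Rightarrow> 'b list set \<Rightarrow> bool" where
  "is_variety A \<rho> n V \<longleftrightarrow>
     (\<exists>T. T \<noteq> {} \<and> T \<subseteq> polys A n \<times> polys A n \<and> V = Zrho \<rho> n T)"

definition twist :: "('b::comm_semiring_1 mpoly \<times> 'b mpoly) \<Rightarrow> ('b mpoly \<times> 'b mpoly) \<Rightarrow> ('b mpoly \<times> 'b mpoly)" where
  "twist t1 t2 = (fst t1 * fst t2 + snd t1 * snd t2, fst t1 * snd t2 + snd t1 * fst t2)"

definition twist_set :: "('b::comm_semiring_1 mpoly \<times> 'b mpoly) set \<Rightarrow> ('b mpoly \<times> 'b mpoly) set \<Rightarrow> ('b mpoly \<times> 'b mpoly) set" where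
  "twist_set T1 T2 = {twist t1 t2 | t1 t2. t1 \<in> T1 \<and> t2 \<in> T2}"

end

theory Submission
  imports Defs
begin

text \<open>Evaluation at a point is a semiring homomorphism, so a point of \<open>Z(T\<^sub>1)\<close> satisfies
  every twisted pair: from \<open>a\<^sub>1 \<rho> b\<^sub>1\<close> one gets \<open>a\<^sub>1a\<^sub>2 + b\<^sub>1b\<^sub>2 \<rho> b\<^sub>1a\<^sub>2 + a\<^sub>1b\<^sub>2\<close>.
  A point with \<open>0 \<rho> 1\<close> would give \<open>0 = 0\<cdot>a \<rho> 1\<cdot>a = a\<close> for every \<open>a\<close>, i.e. \<open>\<rho> = B \<times> B\<close>.
  An intersection of varieties is the variety of the union of their defining sets, and the
  empty intersection is \<open>Z({(0, 0)})\<close>.\<close>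

definition linear_extension :: "('a::comm_monoid_add \<Rightarrow> 'b::comm_semiring_1) \<Rightarrow> ('a \<Rightarrow>\<^sub>0 'b) \<Rightarrow> 'b" where
  "linear_extension h f = (\<Sum>m\<in>Poly_Mapping.keys f. Poly_Mapping.lookup f m * h m)"

lemma linear_extension_add:
  "linear_extension h (f + g) = linear_extension h f + linear_extension h g"
  unfolding linear_extension_def by (rule setsum_keys_plus_distrib) (simp_all add: distrib_right)

lemma linear_extension_zero: "linear_extension h 0 = 0"
  by (simp add: linear_extension_def)

lemma linear_extension_sum: "linear_extension h (sum F I) = (\<Sum>i\<in>I. linear_extension h (F i))"
  by (induction I rule: infinite_finite_induct) (simp_all add: linear_extension_zero linear_extension_add)

lemma linear_extension_single: "linear_extension h (Poly_Mapping.single m c) = c * h m"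
  by (simp add: linear_extension_def)

lemma sum_single_lookup: "(\<Sum>m\<in>Poly_Mapping.keys f. Poly_Mapping.single m (Poly_Mapping.lookup f m)) = f"
  by (rule poly_mapping_eqI) (simp add: lookup_sum lookup_single when_def in_keys_iff sum.delta)

lemma linear_extension_mult:
  assumes "\<And>a b. h (a + b) = h a * h b"
  shows "linear_extension h (f * g) = linear_extension h f * linear_extension h g"
proof -
  let ?single = "\<lambda>f m. Poly_Mapping.single m (Poly_Mapping.lookup f m)"
  have "f * g = (\<Sum>m\<in>Poly_Mapping.keys f. \<Sum>m'\<in>Poly_Mapping.keys g. ?single f m * ?single g m')"
    by (simp add: sum_single_lookup flip: sum_distrib_left sum_distrib_right)
  then have "linear_extension h (f * g) = (\<Sum>m\<in>Poly_Mapping.keys f. \<Sum>m'\<in>Poly_Mapping.keys g.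
      (Poly_Mapping.lookup f m * h m) * (Poly_Mapping.lookup g m' * h m'))"
    by (simp add: linear_extension_sum mult_single linear_extension_single assms mult_ac)
  also have "\<dots> = linear_extension h f * linear_extension h g"
    by (simp add: linear_extension_def sum_distrib_left sum_distrib_right sum.swap[of _ "Poly_Mapping.keys g"])
  finally show ?thesis .
qed

definition monomial_value :: "'b::comm_semiring_1 list \<Rightarrow> (nat \<Rightarrow>\<^sub>0 nat) \<Rightarrow> 'b" where
  "monomial_value P m = (\<Prod>i\<in>Poly_Mapping.keys m. (P ! i) ^ Poly_Mapping.lookup m i)"

lemma monomial_value_superset:
  assumes "finite S" "Poly_Mapping.keys m \<subseteq> S"
  shows "monomial_value P m = (\<Prod>i\<in>S. (P ! i) ^ Poly_Mapping.lookup m i)"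
  unfolding monomial_value_def using assms
  by (intro prod.mono_neutral_left) (auto simp: in_keys_iff)

lemma monomial_value_add: "monomial_value P (a + b) = monomial_value P a * monomial_value P b"
proof -
  let ?S = "Poly_Mapping.keys a \<union> Poly_Mapping.keys b"
  have "monomial_value P (a + b) = (\<Prod>i\<in>?S. (P ! i) ^ Poly_Mapping.lookup (a + b) i)"
    using keys_add[of a b] by (intro monomial_value_superset) auto
  also have "\<dots> = (\<Prod>i\<in>?S. (P ! i) ^ Poly_Mapping.lookup a i) * (\<Prod>i\<in>?S. (P ! i) ^ Poly_Mapping.lookup b i)"
    by (simp add: lookup_add power_add prod.distrib)
  also have "\<dots> = monomial_value P a * monomial_value P b"
    using monomial_value_superset[of ?S a P] monomial_value_superset[of ?S b P] by simp
  finally show ?thesis .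
qed

lemma eval_eq_linear_extension: "eval f P = linear_extension (monomial_value P) f"
  by (simp add: eval_def linear_extension_def monomial_value_def)

lemma eval_add: "eval (f + g) P = eval f P + eval g P"
  by (simp add: eval_eq_linear_extension linear_extension_add)

lemma eval_mult: "eval (f * g) P = eval f P * eval g P"
  by (simp add: eval_eq_linear_extension linear_extension_mult monomial_value_add)

lemma eval_0: "eval 0 P = 0"
  by (simp add: eval_def)

lemma eval_1: "eval 1 P = 1"
  by (simp add: eval_def lookup_one)

lemma congruence_refl: "congruence \<rho> \<Longrightarrow> (a, a) \<in> \<rho>"
  unfolding congruence_def equiv_def refl_on_def by blast

lemma congruence_sym: "congruence \<rho> \<Longrightarrow> (a, b) \<in> \<rho> \<Longrightarrow> (b, a) \<in> \<rho>"
  unfolding congruence_def equiv_def by (meson symD)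

lemma congruence_trans: "congruence \<rho> \<Longrightarrow> (a, b) \<in> \<rho> \<Longrightarrow> (b, c) \<in> \<rho> \<Longrightarrow> (a, c) \<in> \<rho>"
  unfolding congruence_def equiv_def by (meson transD)

lemma congruence_add: "congruence \<rho> \<Longrightarrow> (a, b) \<in> \<rho> \<Longrightarrow> (c, d) \<in> \<rho> \<Longrightarrow> (a + c, b + d) \<in> \<rho>"
  unfolding congruence_def by blast

lemma congruence_mult: "congruence \<rho> \<Longrightarrow> (a, b) \<in> \<rho> \<Longrightarrow> (c, d) \<in> \<rho> \<Longrightarrow> (a * c, b * d) \<in> \<rho>"
  unfolding congruence_def by blast

lemma congruence_zero_one_imp_UNIV:
  assumes "congruence \<rho>" "(0, 1) \<in> \<rho>"
  shows "\<rho> = UNIV"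
proof -
  have zero_rel: "(0, a) \<in> \<rho>" for a
    using congruence_mult[OF assms congruence_refl[OF assms(1), of a]] by simp
  have "(a, b) \<in> \<rho>" for a b
    using congruence_trans[OF assms(1) congruence_sym[OF assms(1) zero_rel] zero_rel] .
  then show ?thesis by auto
qed

lemma congruence_twist_left:
  assumes "congruence \<rho>" "(a\<^sub>1, b\<^sub>1) \<in> \<rho>"
  shows "(a\<^sub>1 * a\<^sub>2 + b\<^sub>1 * b\<^sub>2, a\<^sub>1 * b\<^sub>2 + b\<^sub>1 * a\<^sub>2) \<in> \<rho>"
proof -
  have "(a\<^sub>1 * a\<^sub>2, b\<^sub>1 * a\<^sub>2) \<in> \<rho>" "(b\<^sub>1 * b\<^sub>2, a\<^sub>1 * b\<^sub>2) \<in> \<rho>"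
    using assms congruence_sym congruence_refl congruence_mult by metis+
  from congruence_add[OF assms(1) this] show ?thesis
    by (simp add: add.commute)
qed

lemma congruence_twist_right:
  assumes "congruence \<rho>" "(a\<^sub>2, b\<^sub>2) \<in> \<rho>"
  shows "(a\<^sub>1 * a\<^sub>2 + b\<^sub>1 * b\<^sub>2, a\<^sub>1 * b\<^sub>2 + b\<^sub>1 * a\<^sub>2) \<in> \<rho>"
  using congruence_twist_left[OF assms, of a\<^sub>1 b\<^sub>1] by (simp add: mult.commute add.commute)

lemma Zrho_zero_one:
  assumes "congruence \<rho>" "\<rho> \<noteq> UNIV"
  shows "Zrho \<rho> n {(0, 1)} = {}"
  using assms congruence_zero_one_imp_UNIV by (auto simp: Zrho_def eval_0 eval_1)

lemma Zrho_diagonal: "congruence \<rho> \<Longrightarrow> Zrho \<rho> n {(f, f)} = points n"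
  by (auto simp: Zrho_def congruence_refl)

lemma Zrho_union_subset_twist_set:
  assumes "congruence \<rho>"
  shows "Zrho \<rho> n T\<^sub>1 \<union> Zrho \<rho> n T\<^sub>2 \<subseteq> Zrho \<rho> n (twist_set T\<^sub>1 T\<^sub>2)"
  using assms congruence_twist_left congruence_twist_right
  by (fastforce simp: Zrho_def twist_set_def twist_def eval_add eval_mult)

lemma Zrho_UN:
  assumes "I \<noteq> {}"
  shows "Zrho \<rho> n (\<Union>i\<in>I. T i) = points n \<inter> (\<Inter>i\<in>I. Zrho \<rho> n (T i))"
  using assms by (auto simp: Zrho_def)

lemma is_variety_points:
  assumes "congruence \<rho>"
  shows "is_variety A \<rho> n (points n)"
  unfolding is_variety_def
  by (rule exI[of _ "{(0, 0)}"]) (simp add: Zrho_diagonal[OF assms] polys_def)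

lemma is_variety_Inter:
  assumes "congruence \<rho>" "\<forall>V\<in>\<V>. is_variety A \<rho> n V"
  shows "is_variety A \<rho> n (points n \<inter> \<Inter>\<V>)"
proof (cases "\<V> = {}")
  case True
  then show ?thesis using is_variety_points[OF assms(1)] by simp
next
  case False
  have "\<forall>V\<in>\<V>. \<exists>T. T \<noteq> {} \<and> T \<subseteq> polys A n \<times> polys A n \<and> Zrho \<rho> n T = V"
    using assms(2) unfolding is_variety_def by metis
  then obtain T where T_ne: "\<And>V. V \<in> \<V> \<Longrightarrow> T V \<noteq> {}"
    and T_polys: "\<And>V. V \<in> \<V> \<Longrightarrow> T V \<subseteq> polys A n \<times> polys A n"
    and Zrho_T: "\<And>V. V \<in> \<V> \<Longrightarrow> Zrho \<rho> n (T V) = V"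
    by metis
  have "Zrho \<rho> n (\<Union>V\<in>\<V>. T V) = points n \<inter> \<Inter>\<V>"
    using Zrho_UN[OF False, of \<rho> n T] by (simp add: Zrho_T)
  moreover have "(\<Union>V\<in>\<V>. T V) \<noteq> {}"
    using False T_ne by blast
  moreover have "(\<Union>V\<in>\<V>. T V) \<subseteq> polys A n \<times> polys A n"
    using T_polys by (rule UN_least)
  ultimately show ?thesis
    unfolding is_variety_def by (intro exI[of _ "\<Union>V\<in>\<V>. T V"]) simp
qed

theorem lemma3p3:
  fixes A :: "'b::comm_semiring_1 set" and \<rho> :: "('b \<times> 'b) set" and n :: nat
  assumes "subsemiring A"
    and "congruence \<rho>"
    and "\<rho> \<noteq> UNIV"
  shows "Zrho \<rho> n {(0, 1)} = {}
    \<and> (\<forall>f\<in>polys A n. Zrho \<rho> n {(f, f)} = points n)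
    \<and> (\<forall>T1 T2. T1 \<noteq> {} \<and> T1 \<subseteq> polys A n \<times> polys A n \<and> T2 \<noteq> {} \<and> T2 \<subseteq> polys A n \<times> polys A n
          \<longrightarrow> Zrho \<rho> n T1 \<union> Zrho \<rho> n T2 \<subseteq> Zrho \<rho> n (twist_set T1 T2))
    \<and> (\<forall>\<V>. (\<forall>V\<in>\<V>. is_variety A \<rho> n V) \<longrightarrow> is_variety A \<rho> n (points n \<inter> \<Inter>\<V>))"
  using Zrho_zero_one[OF assms(2,3)] Zrho_diagonal[OF assms(2)]
    Zrho_union_subset_twist_set[OF assms(2)] is_variety_Inter[OF assms(2)]
  by blast

end
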